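(* Let $I\subseteq\mathbb{R}$ be an interval and let $f:I\to\mathbb{R}$ be absolutely continuous on $I^{\circ}$, the interior of $I$. Let $a,b\in I^{\circ}$ with $a<b$, and suppose $f'\in L[a,b]$. If $$f(a)=\max_{a\le x\le b} f(x)=f(b)\quad\text{and}\quad \int_a^b f(t)\,dt=0,$$ then $$\max_{a\le x\le b} f(x)^2\le \frac{b-a}{12}\int_a^b f'(x)^2\,dx .$$ Moreover, the constant $\frac{b-a}{12}$ is best possible (it cannot be replaced by a smaller constant such that the inequality remains valid for all functions satisfying the hypotheses).
   Context: $L[a,b]$ denotes the space of Lebesgue integrable functions on $[a,b]$. *)

theory Defs
  imports "HOL-Analysis.Analysis"
begin

definition abs_cont_on :: "real set \<Rightarrow> (real \<Rightarrow> real) \<Rightarrow> bool" where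
  "abs_cont_on S f \<longleftrightarrow>
     (\<forall>e>0. \<exists>d>0. \<forall>(n::nat) (x::nat \<Rightarrow> real) (y::nat \<Rightarrow> real).
        (\<forall>k<n. x k < y k \<and> {x k..y k} \<subseteq> S) \<and>
        (\<forall>j<n. \<forall>k<n. j \<noteq> k \<longrightarrow> y j \<le> x k \<or> y k \<le> x j) \<and>
        (\<Sum>k<n. y k - x k) < d
        \<longrightarrow> (\<Sum>k<n. \<bar>f (y k) - f (x k)\<bar>) < e)"

definition admissible :: "real set \<Rightarrow> real \<Rightarrow> real \<Rightarrow> (real \<Rightarrow> real) \<Rightarrow> (real \<Rightarrow> real) \<Rightarrow> bool" where
  "admissible I a b f g \<longleftrightarrow>
     is_interval I \<and> abs_cont_on (interior I) f \<and>
     a \<in> interior I \<and> b \<in> interior I \<and> a < b \<and>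
     (AE x in lborel. x \<in> interior I \<longrightarrow> (f has_real_derivative g x) (at x)) \<and>
     set_integrable lborel {a..b} g \<and>
     (\<forall>x\<in>{a..b}. f x \<le> f a) \<and> f a = f b \<and>
     (LBINT t:{a..b}. f t) = 0"

end

theory Submission
  imports Defs
begin

text \<open>
  Fix \<open>t \<in> [a,b]\<close> and let \<open>k(s) = s - t + (b - a)/2\<close> for \<open>s \<le> t\<close> and \<open>k(s) = s - t - (b - a)/2\<close>
  for \<open>s > t\<close>. Integration by parts together with \<open>\<integral> f = 0\<close> gives \<open>\<integral> (s - t) f'(s) ds = (b - a) f(a)\<close>,
  and with \<open>f(a) = f(b)\<close> this yields \<open>\<integral> k f' = (b - a) f(t)\<close>. As \<open>\<integral> k\<^sup>2 = (b - a)\<^sup>3/12\<close> whatever \<open>t\<close> is,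
  the Cauchy-Schwarz inequality gives \<open>f(t)\<^sup>2 \<le> (b - a)/12 \<cdot> \<integral> f'\<^sup>2\<close>. The second Legendre polynomial,
  transported to \<open>[a,b]\<close>, attains equality, so the constant is best possible.

  Integration by parts rests on the fundamental theorem of calculus for absolutely continuous
  functions, which holds for the Henstock-Kurzweil integral by a gauge argument.
\<close>

section \<open>Absolute continuity\<close>

definition nonoverlapping_intervals :: "real set \<Rightarrow> nat \<Rightarrow> (nat \<Rightarrow> real) \<Rightarrow> (nat \<Rightarrow> real) \<Rightarrow> bool" where
  "nonoverlapping_intervals S n x y \<longleftrightarrow>
     (\<forall>k<n. x k < y k \<and> {x k..y k} \<subseteq> S) \<and> (\<forall>j<n. \<forall>k<n. j \<noteq> k \<longrightarrow> y j \<le> x k \<or> y k \<le> x j)"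

lemma abs_cont_on_iff:
  "abs_cont_on S F \<longleftrightarrow>
     (\<forall>e>0. \<exists>d>0. \<forall>n x y. nonoverlapping_intervals S n x y \<and> (\<Sum>k<n. y k - x k) < d
        \<longrightarrow> (\<Sum>k<n. \<bar>F (y k) - F (x k)\<bar>) < e)"
  unfolding abs_cont_on_def nonoverlapping_intervals_def by (simp only: conj_assoc)

lemma abs_cont_onE:
  assumes "abs_cont_on S F" "e > 0"
  obtains d where "d > 0"
    "\<And>n x y. nonoverlapping_intervals S n x y \<Longrightarrow> (\<Sum>k<n. y k - x k) < d \<Longrightarrow>
       (\<Sum>k<n. \<bar>F (y k) - F (x k)\<bar>) < e"
proof -
  from assms obtain d where d: "d > 0" "\<forall>n x y. nonoverlapping_intervals S n x y \<and>
      (\<Sum>k<n. y k - x k) < d \<longrightarrow> (\<Sum>k<n. \<bar>F (y k) - F (x k)\<bar>) < e"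
    unfolding abs_cont_on_iff by auto
  show thesis
  proof (rule that[OF d(1)])
    fix n x y assume "nonoverlapping_intervals S n x y" "(\<Sum>k<n. y k - x k) < d"
    then show "(\<Sum>k<n. \<bar>F (y k) - F (x k)\<bar>) < e" using d(2) by simp
  qed
qed

lemma nonoverlapping_intervalsD:
  assumes "nonoverlapping_intervals S n x y" "k < n"
  shows "x k < y k" "x k \<in> S" "y k \<in> S"
proof -
  have "x k < y k" "{x k..y k} \<subseteq> S" using assms unfolding nonoverlapping_intervals_def by blast+
  then show "x k < y k" "x k \<in> S" "y k \<in> S" by auto
qed

lemma abs_cont_on_subset:
  assumes "abs_cont_on T F" "S \<subseteq> T"
  shows "abs_cont_on S F"
  unfolding abs_cont_on_iff
proof (intro allI impI)
  fix e :: real assume "e > 0"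
  obtain d where "d > 0" and ac: "\<And>n x y. nonoverlapping_intervals T n x y \<Longrightarrow>
      (\<Sum>k<n. y k - x k) < d \<Longrightarrow> (\<Sum>k<n. \<bar>F (y k) - F (x k)\<bar>) < e"
    using abs_cont_onE[OF assms(1) \<open>e > 0\<close>] by blast
  have "nonoverlapping_intervals T n x y" if "nonoverlapping_intervals S n x y" for n x y
    using that assms(2) unfolding nonoverlapping_intervals_def by blast
  with ac \<open>d > 0\<close> show "\<exists>d>0. \<forall>n x y. nonoverlapping_intervals S n x y \<and> (\<Sum>k<n. y k - x k) < d
      \<longrightarrow> (\<Sum>k<n. \<bar>F (y k) - F (x k)\<bar>) < e"
    by blast
qed

lemma lipschitz_on_imp_abs_cont_on:
  fixes F :: "real \<Rightarrow> real"
  assumes lip: "C-lipschitz_on S F"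
  shows "abs_cont_on S F"
  unfolding abs_cont_on_iff
proof (intro allI impI)
  fix e :: real assume "e > 0"
  have C: "C \<ge> 0" using lip by (rule lipschitz_on_nonneg)
  show "\<exists>d>0. \<forall>n x y. nonoverlapping_intervals S n x y \<and> (\<Sum>k<n. y k - x k) < d
          \<longrightarrow> (\<Sum>k<n. \<bar>F (y k) - F (x k)\<bar>) < e"
  proof (intro exI conjI allI impI)
    show "e / (C + 1) > 0" using \<open>e > 0\<close> C by simp
    fix n x y assume H: "nonoverlapping_intervals S n x y \<and> (\<Sum>k<n. y k - x k) < e / (C + 1)"
    then have small: "(\<Sum>k<n. y k - x k) < e / (C + 1)" by blast
    note xy = nonoverlapping_intervalsD[OF H[THEN conjunct1]]
    have "(\<Sum>k<n. \<bar>F (y k) - F (x k)\<bar>) \<le> (\<Sum>k<n. C * (y k - x k))"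
    proof (rule sum_mono)
      fix k assume "k \<in> {..<n}"
      then have "x k < y k" "x k \<in> S" "y k \<in> S" using xy by auto
      then show "\<bar>F (y k) - F (x k)\<bar> \<le> C * (y k - x k)"
        using lipschitz_onD[OF lip, of "y k" "x k"] by (simp add: dist_real_def)
    qed
    also have "\<dots> = C * (\<Sum>k<n. y k - x k)" by (simp add: sum_distrib_left)
    also have "\<dots> \<le> (C + 1) * (\<Sum>k<n. y k - x k)"
      using xy(1) by (intro mult_right_mono sum_nonneg) (auto simp: less_imp_le)
    also have "\<dots> < (C + 1) * (e / (C + 1))" using small C by (intro mult_strict_left_mono) auto
    also have "\<dots> = e" using C by simp
    finally show "(\<Sum>k<n. \<bar>F (y k) - F (x k)\<bar>) < e" .
  qed
qed

lemma abs_cont_on_imp_continuous_on: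
  assumes "abs_cont_on {c..d} F"
  shows "continuous_on {c..d} F"
  unfolding continuous_on_iff
proof (intro ballI allI impI)
  fix x e :: real assume x: "x \<in> {c..d}" and "e > 0"
  obtain \<delta> where "\<delta> > 0" and ac: "\<And>n X Y. nonoverlapping_intervals {c..d} n X Y \<Longrightarrow>
      (\<Sum>k<n. Y k - X k) < \<delta> \<Longrightarrow> (\<Sum>k<n. \<bar>F (Y k) - F (X k)\<bar>) < e"
    using abs_cont_onE[OF assms \<open>e > 0\<close>] by blast
  have "dist (F x') (F x) < e" if x': "x' \<in> {c..d}" "dist x' x < \<delta>" for x'
  proof (cases "x' = x")
    case False
    have "nonoverlapping_intervals {c..d} 1 (\<lambda>_. min x x') (\<lambda>_. max x x')"
      using False x x' by (auto simp: nonoverlapping_intervals_def)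
    from ac[OF this] have "\<bar>F (max x x') - F (min x x')\<bar> < e"
      using x' by (simp add: dist_real_def)
    then show ?thesis
      by (cases "x \<le> x'") (simp_all add: dist_real_def max_def min_def abs_minus_commute)
  qed (use \<open>e > 0\<close> in simp)
  then show "\<exists>r>0. \<forall>x'\<in>{c..d}. dist x' x < r \<longrightarrow> dist (F x') (F x) < e"
    using \<open>\<delta> > 0\<close> by blast
qed

lemma abs_cont_on_bounded:
  assumes "abs_cont_on {c..d} F"
  obtains M where "M \<ge> 0" "\<And>x. x \<in> {c..d} \<Longrightarrow> \<bar>F x\<bar> \<le> M"
proof -
  have "bounded (F ` {c..d})"
    using abs_cont_on_imp_continuous_on[OF assms] by (intro compact_imp_bounded compact_continuous_image) auto
  then obtain M where "\<forall>x\<in>{c..d}. \<bar>F x\<bar> \<le> M" by (auto simp: bounded_iff)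
  then show ?thesis using that[of "max M 0"] by force
qed

lemma abs_cont_on_mult:
  assumes F: "abs_cont_on {c..d} F" and G: "abs_cont_on {c..d} G"
  shows "abs_cont_on {c..d} (\<lambda>x. F x * G x)"
  unfolding abs_cont_on_iff
proof (intro allI impI)
  fix e :: real assume "e > 0"
  obtain MF where MF: "MF \<ge> 0" "\<And>x. x \<in> {c..d} \<Longrightarrow> \<bar>F x\<bar> \<le> MF"
    using abs_cont_on_bounded[OF F] by blast
  obtain MG where MG: "MG \<ge> 0" "\<And>x. x \<in> {c..d} \<Longrightarrow> \<bar>G x\<bar> \<le> MG"
    using abs_cont_on_bounded[OF G] by blast
  obtain \<delta>F where "\<delta>F > 0" and acF: "\<And>n x y. nonoverlapping_intervals {c..d} n x y \<Longrightarrow>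
      (\<Sum>k<n. y k - x k) < \<delta>F \<Longrightarrow> (\<Sum>k<n. \<bar>F (y k) - F (x k)\<bar>) < e / (2 * (MG + 1))"
    using abs_cont_onE[OF F, of "e / (2 * (MG + 1))"] \<open>e > 0\<close> MG by auto
  obtain \<delta>G where "\<delta>G > 0" and acG: "\<And>n x y. nonoverlapping_intervals {c..d} n x y \<Longrightarrow>
      (\<Sum>k<n. y k - x k) < \<delta>G \<Longrightarrow> (\<Sum>k<n. \<bar>G (y k) - G (x k)\<bar>) < e / (2 * (MF + 1))"
    using abs_cont_onE[OF G, of "e / (2 * (MF + 1))"] \<open>e > 0\<close> MF by auto
  show "\<exists>r>0. \<forall>n x y. nonoverlapping_intervals {c..d} n x y \<and> (\<Sum>k<n. y k - x k) < r
          \<longrightarrow> (\<Sum>k<n. \<bar>F (y k) * G (y k) - F (x k) * G (x k)\<bar>) < e"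
  proof (intro exI conjI allI impI)
    show "min \<delta>F \<delta>G > 0" using \<open>\<delta>F > 0\<close> \<open>\<delta>G > 0\<close> by simp
    fix n x y assume H: "nonoverlapping_intervals {c..d} n x y \<and> (\<Sum>k<n. y k - x k) < min \<delta>F \<delta>G"
    note xy = nonoverlapping_intervalsD[OF H[THEN conjunct1]]
    have SF: "(\<Sum>k<n. \<bar>F (y k) - F (x k)\<bar>) < e / (2 * (MG + 1))"
      using acF[OF H[THEN conjunct1]] H by simp
    have SG: "(\<Sum>k<n. \<bar>G (y k) - G (x k)\<bar>) < e / (2 * (MF + 1))"
      using acG[OF H[THEN conjunct1]] H by simp
    have term_le: "\<bar>F (y k) * G (y k) - F (x k) * G (x k)\<bar>
            \<le> (MG + 1) * \<bar>F (y k) - F (x k)\<bar> + (MF + 1) * \<bar>G (y k) - G (x k)\<bar>" if "k < n" for k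
    proof -
      have "F (y k) * G (y k) - F (x k) * G (x k) = G (y k) * (F (y k) - F (x k)) + F (x k) * (G (y k) - G (x k))"
        by (simp add: algebra_simps)
      also have "\<bar>\<dots>\<bar> \<le> \<bar>G (y k)\<bar> * \<bar>F (y k) - F (x k)\<bar> + \<bar>F (x k)\<bar> * \<bar>G (y k) - G (x k)\<bar>"
        by (simp add: abs_mult abs_triangle_ineq[THEN order_trans])
      also have "\<dots> \<le> (MG + 1) * \<bar>F (y k) - F (x k)\<bar> + (MF + 1) * \<bar>G (y k) - G (x k)\<bar>"
        using MF(2)[OF xy(2)[OF that]] MG(2)[OF xy(3)[OF that]] by (intro add_mono mult_right_mono) auto
      finally show ?thesis .
    qed
    have "(\<Sum>k<n. \<bar>F (y k) * G (y k) - F (x k) * G (x k)\<bar>)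
        \<le> (\<Sum>k<n. (MG + 1) * \<bar>F (y k) - F (x k)\<bar> + (MF + 1) * \<bar>G (y k) - G (x k)\<bar>)"
      using term_le by (intro sum_mono) simp
    also have "\<dots> = (MG + 1) * (\<Sum>k<n. \<bar>F (y k) - F (x k)\<bar>) + (MF + 1) * (\<Sum>k<n. \<bar>G (y k) - G (x k)\<bar>)"
      by (simp add: sum.distrib sum_distrib_left)
    also have "\<dots> < (MG + 1) * (e / (2 * (MG + 1))) + (MF + 1) * (e / (2 * (MF + 1)))"
      using SF SG MF MG by (intro add_strict_mono mult_strict_left_mono) auto
    also have "\<dots> = e"
      using MF(1) MG(1) by (simp add: field_simps add_nonneg_eq_0_iff)
    finally show "(\<Sum>k<n. \<bar>F (y k) * G (y k) - F (x k) * G (x k)\<bar>) < e" .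
  qed
qed

lemma division_of_nonoverlapping_intervals:
  assumes div: "\<D> division_of \<Union>\<D>" and sub: "\<Union>\<D> \<subseteq> S"
    and nondegenerate: "\<And>K. K \<in> \<D> \<Longrightarrow> Inf K < Sup K"
  obtains n x y where "nonoverlapping_intervals S n x y"
    "\<And>\<phi> :: real \<Rightarrow> real \<Rightarrow> real. (\<Sum>k<n. \<phi> (x k) (y k)) = (\<Sum>K\<in>\<D>. \<phi> (Inf K) (Sup K))"
proof -
  have "finite \<D>" using div by blast
  then obtain b where b: "bij_betw b {..<card \<D>} \<D>"
    using ex_bij_betw_nat_finite by (metis atLeast0LessThan)
  define x where "x k = Inf (b k)" for k
  define y where "y k = Sup (b k)" for k
  have bD: "b k \<in> \<D>" if "k < card \<D>" for k
    using b that by (auto simp: bij_betw_def)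
  have xy: "b k = {x k..y k}" "x k < y k" if "k < card \<D>" for k
    using division_ofD(3,4)[OF div bD[OF that]] nondegenerate[OF bD[OF that]]
    by (force simp: x_def y_def)+
  have "nonoverlapping_intervals S (card \<D>) x y"
    unfolding nonoverlapping_intervals_def
  proof (intro conjI allI impI)
    fix k assume k: "k < card \<D>"
    show "x k < y k" by (rule xy(2)[OF k])
    show "{x k..y k} \<subseteq> S" using xy(1)[OF k] bD[OF k] sub by blast
  next
    fix j k assume jk: "j < card \<D>" "k < card \<D>" "j \<noteq> k"
    then have "b j \<noteq> b k" using b by (auto simp: bij_betw_def inj_on_def)
    then have "interior {x j..y j} \<inter> interior {x k..y k} = {}"
      using division_ofD(5)[OF div bD bD] xy(1) jk by metis
    then show "y j \<le> x k \<or> y k \<le> x j"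
      using xy(2)[OF jk(1)] xy(2)[OF jk(2)] by (auto simp: min_def max_def split: if_splits)
  qed
  moreover have "(\<Sum>k<card \<D>. \<phi> (x k) (y k)) = (\<Sum>K\<in>\<D>. \<phi> (Inf K) (Sup K))"
    for \<phi> :: "real \<Rightarrow> real \<Rightarrow> real"
    using sum.reindex_bij_betw[OF b, of "\<lambda>K. \<phi> (Inf K) (Sup K)"] by (simp add: x_def y_def)
  ultimately show ?thesis using that by blast
qed

lemma abs_cont_on_division_sum:
  assumes "abs_cont_on S F" "e > 0"
  obtains \<delta> where "\<delta> > 0"
    "\<And>\<D>. \<D> division_of \<Union>\<D> \<Longrightarrow> \<Union>\<D> \<subseteq> S \<Longrightarrow> measure lebesgue (\<Union>\<D>) < \<delta> \<Longrightarrow>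
       (\<Sum>K\<in>\<D>. \<bar>F (Sup K) - F (Inf K)\<bar>) < e"
proof -
  obtain \<delta> where "\<delta> > 0" and ac: "\<And>n x y. nonoverlapping_intervals S n x y \<Longrightarrow>
      (\<Sum>k<n. y k - x k) < \<delta> \<Longrightarrow> (\<Sum>k<n. \<bar>F (y k) - F (x k)\<bar>) < e"
    using abs_cont_onE[OF assms] by blast
  have "(\<Sum>K\<in>\<D>. \<bar>F (Sup K) - F (Inf K)\<bar>) < e"
    if div: "\<D> division_of \<Union>\<D>" and sub: "\<Union>\<D> \<subseteq> S" and small: "measure lebesgue (\<Union>\<D>) < \<delta>"
    for \<D>
  proof -
    define \<D>' where "\<D>' = {K \<in> \<D>. Inf K < Sup K}"
    have div': "\<D>' division_of \<Union>\<D>'" by (rule division_of_subset[OF div]) (auto simp: \<D>'_def)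
    have sub': "\<Union>\<D>' \<subseteq> S" using sub by (auto simp: \<D>'_def)
    have nondegenerate: "\<And>K. K \<in> \<D>' \<Longrightarrow> Inf K < Sup K" by (simp add: \<D>'_def)
    obtain n x y where fam: "nonoverlapping_intervals S n x y"
      and sums: "\<And>\<phi> :: real \<Rightarrow> real \<Rightarrow> real.
        (\<Sum>k<n. \<phi> (x k) (y k)) = (\<Sum>K\<in>\<D>'. \<phi> (Inf K) (Sup K))"
      using division_of_nonoverlapping_intervals[OF div' sub' nondegenerate] by blast
    have drop_degenerate: "(\<Sum>K\<in>\<D>'. \<phi> (Inf K) (Sup K)) = (\<Sum>K\<in>\<D>. \<phi> (Inf K) (Sup K))"
      if "\<And>u. \<phi> u u = 0" for \<phi> :: "real \<Rightarrow> real \<Rightarrow> real"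
    proof (rule sum.mono_neutral_left)
      show "finite \<D>" "\<D>' \<subseteq> \<D>" using div by (auto simp: \<D>'_def)
      have "Sup K = Inf K" if "K \<in> \<D> - \<D>'" for K
        using division_ofD(3,4)[OF div, of K] that by (force simp: \<D>'_def)
      then show "\<forall>K\<in>\<D> - \<D>'. \<phi> (Inf K) (Sup K) = 0" using that by simp
    qed
    have "(\<Sum>k<n. y k - x k) = (\<Sum>K\<in>\<D>. Sup K - Inf K)"
      using sums[of "\<lambda>u v. v - u"] drop_degenerate[of "\<lambda>u v. v - u"] by simp
    also have "\<dots> = (\<Sum>K\<in>\<D>. measure lebesgue K)"
      using division_ofD(3,4)[OF div] by (intro sum.cong) force+
    also have "\<dots> = measure lebesgue (\<Union>\<D>)" by (rule content_division[OF div])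
    finally have "(\<Sum>k<n. \<bar>F (y k) - F (x k)\<bar>) < e" using ac[OF fam] small by simp
    then show ?thesis
      using sums[of "\<lambda>u v. \<bar>F v - F u\<bar>"] drop_degenerate[of "\<lambda>u v. \<bar>F v - F u\<bar>"] by simp
  qed
  with \<open>\<delta> > 0\<close> that show ?thesis by blast
qed

section \<open>The fundamental theorem of calculus for absolutely continuous functions\<close>

lemma sum_tagged_division_subset_snd:
  fixes \<psi> :: "real set \<Rightarrow> 'a::comm_monoid_add"
  assumes p: "p tagged_division_of {c..d}" and "q \<subseteq> p" and degenerate: "\<And>u. \<psi> {u..u} = 0"
  shows "(\<Sum>(x,K)\<in>q. \<psi> K) = (\<Sum>K\<in>snd ` q. \<psi> K)"
proof -
  have "\<psi> (snd z) = 0" if zq: "z \<in> q" "z' \<in> q" "z \<noteq> z'" and eq: "snd z = snd z'" for z z'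
  proof -
    obtain x K x' where z: "z = (x, K)" "z' = (x', K)" using eq by (cases z, cases z') auto
    then have "interior K = {}"
      using tagged_division_ofD(5)[OF p, of x K x' K] zq \<open>q \<subseteq> p\<close> by auto
    moreover have xK: "(x, K) \<in> p" using zq(1) z \<open>q \<subseteq> p\<close> by auto
    moreover obtain u v where "K = {u..v}"
      using tagged_division_ofD(4)[OF p xK] by (metis box_real(2))
    moreover have "x \<in> K" using tagged_division_ofD(2)[OF p xK] .
    ultimately have "K = {u..u}" by auto
    then show ?thesis using z degenerate[of u] by simp
  qed
  moreover have "finite q" using p \<open>q \<subseteq> p\<close> finite_subset by blast
  ultimately show ?thesis
    by (subst sum.reindex_nontrivial) (auto simp: split_def)
qed

lemma negligible_imp_small_open_superset:
  assumes "negligible N" "\<delta> > 0"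
  obtains U where "open U" "N \<subseteq> U" "U \<in> lmeasurable" "measure lebesgue U < \<delta>"
proof -
  have N: "N \<in> sets lebesgue" "N \<in> lmeasurable" "N \<in> null_sets lebesgue"
    using assms(1) negligible_imp_sets negligible_imp_measurable negligible_iff_null_sets by auto
  obtain U where U: "open U" "N \<subseteq> U" "U - N \<in> lmeasurable" "emeasure lebesgue (U - N) < ennreal \<delta>"
    using sets_lebesgue_outer_open[OF N(1) assms(2)] by blast
  have "U = N \<union> (U - N)" using U(2) by blast
  then have "U \<in> lmeasurable" using N(2) U(3) by (metis fmeasurable.Un)
  moreover have "measure lebesgue U = measure lebesgue (U - N)"
    using measure_Diff_null_set[OF fmeasurableD[OF \<open>U \<in> lmeasurable\<close>] N(3)] by simp
  moreover have "measure lebesgue (U - N) < \<delta>"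
    using U(3,4) assms(2) by (simp add: emeasure_eq_measure2 ennreal_less_iff)
  ultimately show ?thesis using U(1,2) that by auto
qed

lemma has_real_derivative_straddle:
  fixes F :: "real \<Rightarrow> real"
  assumes "(F has_real_derivative D) (at x)" "e > 0"
  shows "\<exists>r>0. \<forall>u v. x \<in> {u..v} \<longrightarrow> {u..v} \<subseteq> ball x r \<longrightarrow>
           \<bar>F v - F u - (v - u) * D\<bar> \<le> e * (v - u)"
proof -
  have "(F has_derivative (*) D) (at x)"
    using assms(1) by (simp add: has_field_derivative_def)
  then obtain r where "r > 0" and r: "\<And>y. \<bar>y - x\<bar> < r \<Longrightarrow> \<bar>F y - F x - (y - x) * D\<bar> \<le> e * \<bar>y - x\<bar>"
    using assms(2) unfolding has_derivative_at_alt by (auto simp: real_norm_def mult.commute)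
  have "\<bar>F v - F u - (v - u) * D\<bar> \<le> e * (v - u)" if "x \<in> {u..v}" "{u..v} \<subseteq> ball x r" for u v
  proof -
    have "u \<in> {u..v}" "v \<in> {u..v}" using that(1) by auto
    then have "u \<in> ball x r" "v \<in> ball x r" using that(2) by blast+
    then have "\<bar>F v - F x - (v - x) * D\<bar> \<le> e * (v - x)" "\<bar>F u - F x - (u - x) * D\<bar> \<le> e * (x - u)"
      using r[of u] r[of v] that(1) by (auto simp: dist_real_def abs_minus_commute)
    moreover have "F v - F u - (v - u) * D = (F v - F x - (v - x) * D) - (F u - F x - (u - x) * D)"
      by (simp add: algebra_simps)
    ultimately show ?thesis by (simp add: algebra_simps abs_le_iff)
  qed
  with \<open>r > 0\<close> show ?thesis by blast
qed

lemma has_real_derivative_tagged_sum_gauge: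
  fixes F G :: "real \<Rightarrow> real"
  assumes "c \<le> d" and der: "\<And>x. x \<in> S \<Longrightarrow> (F has_real_derivative G x) (at x)" and "e > 0"
  obtains \<gamma> where "gauge \<gamma>"
    "\<And>p. p tagged_division_of {c..d} \<Longrightarrow> \<gamma> fine p \<Longrightarrow>
       (\<Sum>(x,K)\<in>{(x,K) \<in> p. x \<in> S}. \<bar>measure lborel K * G x - (F (Sup K) - F (Inf K))\<bar>) \<le> e * (d - c)"
proof -
  have "\<forall>x\<in>S. \<exists>r>0. \<forall>u v. x \<in> {u..v} \<longrightarrow> {u..v} \<subseteq> ball x r \<longrightarrow>
      \<bar>F v - F u - (v - u) * G x\<bar> \<le> e * (v - u)"
    using der \<open>e > 0\<close> by (intro ballI has_real_derivative_straddle)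
  from bchoice[OF this] obtain r where r: "\<forall>x\<in>S. r x > 0 \<and> (\<forall>u v. x \<in> {u..v} \<longrightarrow>
      {u..v} \<subseteq> ball x (r x) \<longrightarrow> \<bar>F v - F u - (v - u) * G x\<bar> \<le> e * (v - u))" ..
  define \<gamma> where "\<gamma> x = ball x (if x \<in> S then r x else 1)" for x
  have "gauge \<gamma>" unfolding \<gamma>_def using r by (intro gauge_ball_dependent) simp
  moreover have "(\<Sum>(x,K)\<in>{(x,K) \<in> p. x \<in> S}. \<bar>measure lborel K * G x - (F (Sup K) - F (Inf K))\<bar>)
      \<le> e * (d - c)" if p: "p tagged_division_of {c..d}" and fine: "\<gamma> fine p" for p
  proof -
    have "\<bar>measure lborel K * G x - (F (Sup K) - F (Inf K))\<bar> \<le> e * measure lborel K"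
      if xK: "(x,K) \<in> p" "x \<in> S" for x K
    proof -
      obtain u v where K: "K = {u..v}" "x \<in> {u..v}"
        using tagged_division_ofD(2,4)[OF p xK(1)] by (metis box_real(2))
      have "{u..v} \<subseteq> ball x (r x)" using fineD[OF fine xK(1)] K xK(2) by (simp add: \<gamma>_def)
      then show ?thesis using r xK(2) K by (auto simp: abs_minus_commute)
    qed
    then have "(\<Sum>(x,K)\<in>{(x,K) \<in> p. x \<in> S}. \<bar>measure lborel K * G x - (F (Sup K) - F (Inf K))\<bar>)
        \<le> (\<Sum>(x,K)\<in>{(x,K) \<in> p. x \<in> S}. e * measure lborel K)"
      by (intro sum_mono) auto
    also have "\<dots> \<le> (\<Sum>(x,K)\<in>p. e * measure lborel K)"
      using p \<open>e > 0\<close> by (intro sum_mono2) auto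
    also have "\<dots> = e * (d - c)"
      using additive_content_tagged_division[of p c d] p \<open>c \<le> d\<close>
      by (simp add: sum_distrib_left[symmetric] split_def)
    finally show ?thesis .
  qed
  ultimately show ?thesis using that by blast
qed

lemma abs_cont_on_negligible_tags_gauge:
  assumes ac: "abs_cont_on {c..d} F" and N: "negligible N" and "e > 0"
  obtains \<gamma> where "gauge \<gamma>"
    "\<And>p. p tagged_division_of {c..d} \<Longrightarrow> \<gamma> fine p \<Longrightarrow>
       (\<Sum>(x,K)\<in>{(x,K) \<in> p. x \<in> N}. \<bar>F (Sup K) - F (Inf K)\<bar>) < e"
proof -
  obtain \<delta> where "\<delta> > 0" and small_var: "\<And>\<D>. \<D> division_of \<Union>\<D> \<Longrightarrow> \<Union>\<D> \<subseteq> {c..d} \<Longrightarrow>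
      measure lebesgue (\<Union>\<D>) < \<delta> \<Longrightarrow> (\<Sum>K\<in>\<D>. \<bar>F (Sup K) - F (Inf K)\<bar>) < e"
    using abs_cont_on_division_sum[OF ac \<open>e > 0\<close>] by blast
  obtain U where U: "open U" "N \<subseteq> U" "U \<in> lmeasurable" "measure lebesgue U < \<delta>"
    using negligible_imp_small_open_superset[OF N \<open>\<delta> > 0\<close>] by blast
  have "\<forall>x\<in>N. \<exists>r>0. ball x r \<subseteq> U"
    using U(1,2) open_contains_ball by blast
  from bchoice[OF this] obtain r where r: "\<forall>x\<in>N. r x > 0 \<and> ball x (r x) \<subseteq> U" ..
  define \<gamma> where "\<gamma> x = ball x (if x \<in> N then r x else 1)" for x
  have "gauge \<gamma>" unfolding \<gamma>_def using r by (intro gauge_ball_dependent) simp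
  moreover have "(\<Sum>(x,K)\<in>{(x,K) \<in> p. x \<in> N}. \<bar>F (Sup K) - F (Inf K)\<bar>) < e"
    if p: "p tagged_division_of {c..d}" and fine: "\<gamma> fine p" for p
  proof -
    define q where "q = {(x,K) \<in> p. x \<in> N}"
    have "q \<subseteq> p" by (auto simp: q_def)
    have "snd ` p division_of \<Union>(snd ` p)"
      using division_of_tagged_division[OF p] division_ofD(6)[OF division_of_tagged_division[OF p]]
      by simp
    then have div: "snd ` q division_of \<Union>(snd ` q)"
      by (rule division_of_subset) (use \<open>q \<subseteq> p\<close> in blast)
    have "\<Union>(snd ` q) \<subseteq> U"
      using fineD[OF fine] r by (force simp: q_def \<gamma>_def)
    then have "measure lebesgue (\<Union>(snd ` q)) \<le> measure lebesgue U"
      using lmeasurable_division[OF div] U(3) by (intro measure_mono_fmeasurable) auto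
    moreover have "\<Union>(snd ` q) \<subseteq> {c..d}" using p \<open>q \<subseteq> p\<close> by fastforce
    ultimately have "(\<Sum>K\<in>snd ` q. \<bar>F (Sup K) - F (Inf K)\<bar>) < e"
      using small_var[OF div] U(4) by linarith
    then show ?thesis
      using sum_tagged_division_subset_snd[OF p \<open>q \<subseteq> p\<close>, of "\<lambda>K. \<bar>F (Sup K) - F (Inf K)\<bar>"]
      by (simp add: q_def)
  qed
  ultimately show ?thesis using that by blast
qed

lemma abs_cont_on_has_integral_derivative:
  fixes F G :: "real \<Rightarrow> real"
  assumes cd: "c \<le> d" and ac: "abs_cont_on {c..d} F" and N: "negligible N"
    and der: "\<And>x. x \<in> {c..d} - N \<Longrightarrow> (F has_real_derivative G x) (at x)"
  shows "(G has_integral F d - F c) {c..d}"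
proof -
  text \<open>On tags in \<open>N\<close> the Riemann sum of \<open>h\<close> vanishes, leaving only increments of \<open>F\<close> over
    intervals of small total length; on the other tags the straddle lemma applies.\<close>
  define h where "h x = (if x \<in> N then 0 else G x)" for x
  have "(h has_integral F d - F c) {c..d}"
    unfolding has_integral_real
  proof (intro allI impI)
    fix e :: real assume "e > 0"
    define e' where "e' = e / (2 * (d - c + 1))"
    have "e' > 0" "e' * (d - c) < e / 2" unfolding e'_def using \<open>e > 0\<close> cd by (simp_all add: field_simps)
    obtain \<gamma>1 where "gauge \<gamma>1" and bad: "\<And>p. p tagged_division_of {c..d} \<Longrightarrow> \<gamma>1 fine p \<Longrightarrow>
        (\<Sum>(x,K)\<in>{(x,K) \<in> p. x \<in> N}. \<bar>F (Sup K) - F (Inf K)\<bar>) < e / 2"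
      using abs_cont_on_negligible_tags_gauge[OF ac N half_gt_zero[OF \<open>e > 0\<close>]] by blast
    obtain \<gamma>2 where "gauge \<gamma>2" and good: "\<And>p. p tagged_division_of {c..d} \<Longrightarrow> \<gamma>2 fine p \<Longrightarrow>
        (\<Sum>(x,K)\<in>{(x,K) \<in> p. x \<in> {c..d} - N}. \<bar>measure lborel K * G x - (F (Sup K) - F (Inf K))\<bar>)
          \<le> e' * (d - c)"
      using has_real_derivative_tagged_sum_gauge[OF cd der \<open>e' > 0\<close>] by blast
    show "\<exists>\<gamma>. gauge \<gamma> \<and> (\<forall>p. p tagged_division_of {c..d} \<and> \<gamma> fine p \<longrightarrow>
        norm ((\<Sum>(x,K)\<in>p. measure lborel K *\<^sub>R h x) - (F d - F c)) < e)"
    proof (intro exI conjI allI impI)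
      show "gauge (\<lambda>x. \<gamma>1 x \<inter> \<gamma>2 x)" using \<open>gauge \<gamma>1\<close> \<open>gauge \<gamma>2\<close> by (rule gauge_Int)
      fix p assume "p tagged_division_of {c..d} \<and> (\<lambda>x. \<gamma>1 x \<inter> \<gamma>2 x) fine p"
      then have p: "p tagged_division_of {c..d}" and "\<gamma>1 fine p" "\<gamma>2 fine p"
        by (auto simp: fine_Int)
      define t where "t = (\<lambda>(x,K). measure lborel K * h x - (F (Sup K) - F (Inf K)))"
      define q where "q = {(x,K) \<in> p. x \<in> N}"
      have "finite p" "q \<subseteq> p" using p by (auto simp: q_def)
      have "p - q = {(x,K) \<in> p. x \<in> {c..d} - N}" using tag_in_interval[OF p] by (auto simp: q_def)
      then have good_sum: "(\<Sum>z\<in>p - q. \<bar>t z\<bar>) \<le> e' * (d - c)"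
        using good[OF p \<open>\<gamma>2 fine p\<close>] by (simp add: t_def h_def split_def)
      have bad_sum: "(\<Sum>z\<in>q. \<bar>t z\<bar>) < e / 2"
        using bad[OF p \<open>\<gamma>1 fine p\<close>] by (simp add: q_def t_def h_def split_def abs_minus_commute)
      have "(\<Sum>(x,K)\<in>p. measure lborel K *\<^sub>R h x) - (F d - F c) = (\<Sum>z\<in>p. t z)"
        using additive_tagged_division_1[OF cd p, of F] by (simp add: t_def sum_subtractf split_def)
      then have "norm ((\<Sum>(x,K)\<in>p. measure lborel K *\<^sub>R h x) - (F d - F c)) \<le> (\<Sum>z\<in>p. \<bar>t z\<bar>)"
        by (simp add: sum_abs)
      also have "\<dots> = (\<Sum>z\<in>q. \<bar>t z\<bar>) + (\<Sum>z\<in>p - q. \<bar>t z\<bar>)"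
        using \<open>finite p\<close> \<open>q \<subseteq> p\<close> by (simp add: sum.subset_diff)
      also have "\<dots> < e" using bad_sum good_sum \<open>e' * (d - c) < e / 2\<close> by linarith
      finally show "norm ((\<Sum>(x,K)\<in>p. measure lborel K *\<^sub>R h x) - (F d - F c)) < e" .
    qed
  qed
  then show ?thesis
    by (rule has_integral_spike[OF N, rotated]) (simp add: h_def)
qed

section \<open>The pointwise bound\<close>

lemma AE_lborel_negligible_exception:
  assumes "AE x in lborel. P x"
  obtains N where "negligible N" "\<And>x. x \<notin> N \<Longrightarrow> P x"
proof -
  from assms obtain N where N: "{x \<in> space lborel. \<not> P x} \<subseteq> N" "emeasure lborel N = 0" "N \<in> sets lborel"
    by (rule AE_E)
  then have "N \<in> null_sets lborel" by auto
  then have "negligible N" by (simp add: negligible_iff_null_sets null_sets_completionI)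
  with N(1) that show ?thesis by auto
qed

lemma nn_integral_square_has_integral:
  fixes g :: "real \<Rightarrow> real"
  assumes meas: "set_borel_measurable lborel S g"
    and fin: "(\<integral>\<^sup>+ x\<in>S. ennreal ((g x)\<^sup>2) \<partial>lborel) \<noteq> \<infinity>"
  obtains E where "((\<lambda>x. (g x)\<^sup>2) has_integral E) S" "(\<integral>\<^sup>+ x\<in>S. ennreal ((g x)\<^sup>2) \<partial>lborel) = ennreal E"
proof -
  define \<phi> where "\<phi> x = (indicator S x *\<^sub>R g x)\<^sup>2" for x
  have eq: "(\<integral>\<^sup>+ x\<in>S. ennreal ((g x)\<^sup>2) \<partial>lborel) = (\<integral>\<^sup>+ x. ennreal (\<phi> x) \<partial>lborel)"
    by (intro nn_integral_cong) (auto simp: \<phi>_def indicator_def)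
  have "\<phi> \<in> borel_measurable lborel"
    using meas unfolding \<phi>_def set_borel_measurable_def by measurable
  then have int: "integrable lborel \<phi>"
    using fin eq by (intro integrableI_nonneg) (auto simp: \<phi>_def top.not_eq_extremum)
  have "(\<phi> has_integral integral\<^sup>L lborel \<phi>) UNIV"
    by (rule has_integral_integral_lborel[OF int])
  moreover have "\<phi> = (\<lambda>x. if x \<in> S then (g x)\<^sup>2 else 0)"
    by (auto simp: fun_eq_iff \<phi>_def indicator_def)
  ultimately have "((\<lambda>x. (g x)\<^sup>2) has_integral integral\<^sup>L lborel \<phi>) S"
    using has_integral_restrict_UNIV by metis
  moreover have "(\<integral>\<^sup>+ x. ennreal (\<phi> x) \<partial>lborel) = ennreal (integral\<^sup>L lborel \<phi>)"
    by (rule nn_integral_eq_integral[OF int]) (auto simp: \<phi>_def)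
  ultimately show ?thesis using that eq by auto
qed

lemma has_integral_Cauchy_Schwarz:
  fixes k g :: "real \<Rightarrow> real"
  assumes A: "((\<lambda>s. (k s)\<^sup>2) has_integral A) S" and B: "((\<lambda>s. k s * g s) has_integral B) S"
    and C: "((\<lambda>s. (g s)\<^sup>2) has_integral C) S" and "A > 0"
  shows "B\<^sup>2 \<le> A * C"
proof -
  define l where "l = B / A"
  have "((\<lambda>s. l\<^sup>2 * (k s)\<^sup>2 - 2 * l * (k s * g s) + (g s)\<^sup>2) has_integral (l\<^sup>2 * A - 2 * l * B + C)) S"
    by (intro has_integral_add has_integral_diff has_integral_mult_right A B C)
  moreover have "(\<lambda>s. l\<^sup>2 * (k s)\<^sup>2 - 2 * l * (k s * g s) + (g s)\<^sup>2) = (\<lambda>s. (l * k s - g s)\<^sup>2)"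
    by (auto simp: fun_eq_iff power2_eq_square algebra_simps)
  ultimately have "((\<lambda>s. (l * k s - g s)\<^sup>2) has_integral (l\<^sup>2 * A - 2 * l * B + C)) S" by simp
  then have "0 \<le> l\<^sup>2 * A - 2 * l * B + C" by (rule has_integral_nonneg) simp
  also have "l\<^sup>2 * A - 2 * l * B + C = C - B\<^sup>2 / A"
    using \<open>A > 0\<close> by (simp add: l_def power2_eq_square field_simps)
  finally show ?thesis using \<open>A > 0\<close> by (simp add: field_simps)
qed

lemma has_integral_square_shift:
  fixes m :: real
  assumes "a \<le> b"
  shows "((\<lambda>s. (s - m)\<^sup>2) has_integral ((b - m)^3 - (a - m)^3) / 3) {a..b}"
proof -
  have "((\<lambda>s. (s - m)\<^sup>2) has_integral (b - m)^3 / 3 - (a - m)^3 / 3) {a..b}"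
  proof (rule fundamental_theorem_of_calculus[OF assms])
    fix x assume "x \<in> {a..b}"
    have "((\<lambda>s. (s - m)^3 / 3) has_real_derivative (x - m)\<^sup>2) (at x within {a..b})"
      by (auto intro!: derivative_eq_intros simp: power2_eq_square)
    then show "((\<lambda>s. (s - m)^3 / 3) has_vector_derivative (x - m)\<^sup>2) (at x within {a..b})"
      by (simp add: has_real_derivative_iff_has_vector_derivative)
  qed
  then show ?thesis by (simp add: diff_divide_distrib)
qed

definition jump_kernel :: "real \<Rightarrow> real \<Rightarrow> real \<Rightarrow> real \<Rightarrow> real" where
  "jump_kernel a b t s = (if s \<le> t then s - t + (b - a) / 2 else s - t - (b - a) / 2)"

lemma has_integral_jump_kernel_square:
  assumes "t \<in> {a..b}"
  shows "((\<lambda>s. (jump_kernel a b t s)\<^sup>2) has_integral (b - a)^3 / 12) {a..b}"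
proof -
  have at: "a \<le> t" and tb: "t \<le> b" using assms by auto
  have left: "((\<lambda>s. (jump_kernel a b t s)\<^sup>2) has_integral
      ((t - (t - (b - a) / 2))^3 - (a - (t - (b - a) / 2))^3) / 3) {a..t}"
    using has_integral_square_shift[OF at, of "t - (b - a) / 2"]
    by (rule has_integral_eq[rotated]) (auto simp: jump_kernel_def algebra_simps)
  have right: "((\<lambda>s. (jump_kernel a b t s)\<^sup>2) has_integral
      ((b - (t + (b - a) / 2))^3 - (t - (t + (b - a) / 2))^3) / 3) {t..b}"
    using has_integral_square_shift[OF tb, of "t + (b - a) / 2"]
    by (rule has_integral_spike[OF negligible_sing[of t], rotated])
       (auto simp: jump_kernel_def algebra_simps)
  have "((t - (t - (b - a) / 2))^3 - (a - (t - (b - a) / 2))^3) / 3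
      + ((b - (t + (b - a) / 2))^3 - (t - (t + (b - a) / 2))^3) / 3 = (b - a)^3 / 12"
    by (simp add: field_simps power3_eq_cube)
  with has_integral_combine[OF at tb left right] show ?thesis by (simp only:)
qed

lemma has_integral_jump_kernel_mult:
  fixes f g :: "real \<Rightarrow> real"
  assumes t: "t \<in> {a..b}" and "f a = f b"
    and left: "(g has_integral f t - f a) {a..t}" and right: "(g has_integral f b - f t) {t..b}"
    and moment: "((\<lambda>s. (s - t) * g s) has_integral (b - a) * f a) {a..b}"
  shows "((\<lambda>s. jump_kernel a b t s * g s) has_integral (b - a) * f t) {a..b}"
proof -
  have at: "a \<le> t" and tb: "t \<le> b" using t by auto
  have "(\<lambda>s. (s - t) * g s) integrable_on {a..t}" "(\<lambda>s. (s - t) * g s) integrable_on {t..b}"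
    using moment at tb by (auto intro: integrable_on_subinterval simp: has_integral_integrable)
  then obtain M1 M2 where M1: "((\<lambda>s. (s - t) * g s) has_integral M1) {a..t}"
    and M2: "((\<lambda>s. (s - t) * g s) has_integral M2) {t..b}" by (auto simp: integrable_on_def)
  have "M1 + M2 = (b - a) * f a"
    using has_integral_combine[OF at tb M1 M2] moment by (rule has_integral_unique)
  have K1: "((\<lambda>s. jump_kernel a b t s * g s) has_integral M1 + (b - a) / 2 * (f t - f a)) {a..t}"
    using has_integral_add[OF M1 has_integral_mult_right[OF left, of "(b - a) / 2"]]
    by (rule has_integral_eq[rotated]) (auto simp: jump_kernel_def algebra_simps)
  have K2: "((\<lambda>s. jump_kernel a b t s * g s) has_integral M2 - (b - a) / 2 * (f b - f t)) {t..b}"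
    using has_integral_diff[OF M2 has_integral_mult_right[OF right, of "(b - a) / 2"]]
    by (rule has_integral_spike[OF negligible_sing[of t], rotated])
       (auto simp: jump_kernel_def algebra_simps)
  have "M1 + (b - a) / 2 * (f t - f a) + (M2 - (b - a) / 2 * (f b - f t)) = (b - a) * f t"
    using \<open>M1 + M2 = (b - a) * f a\<close> \<open>f a = f b\<close> by (simp add: field_simps)
  with has_integral_combine[OF at tb K1 K2] show ?thesis by (simp only:)
qed

lemma square_le_energy:
  fixes f g :: "real \<Rightarrow> real"
  assumes "a < b" "t \<in> {a..b}" "f a = f b"
    and "(g has_integral f t - f a) {a..t}" "(g has_integral f b - f t) {t..b}"
    and "((\<lambda>s. (s - t) * g s) has_integral (b - a) * f a) {a..b}"
    and energy: "((\<lambda>s. (g s)\<^sup>2) has_integral E) {a..b}"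
  shows "(f t)\<^sup>2 \<le> (b - a) / 12 * E"
proof -
  have "(b - a)\<^sup>2 * (f t)\<^sup>2 = ((b - a) * f t)\<^sup>2" by (simp add: power_mult_distrib)
  also have "\<dots> \<le> (b - a)^3 / 12 * E"
    using has_integral_Cauchy_Schwarz[OF has_integral_jump_kernel_square[OF \<open>t \<in> {a..b}\<close>]
        has_integral_jump_kernel_mult[OF assms(2-6)] energy] \<open>a < b\<close> by simp
  also have "\<dots> = (b - a)\<^sup>2 * ((b - a) / 12 * E)" by (simp add: power3_eq_cube power2_eq_square)
  finally have "(b - a)\<^sup>2 * (f t)\<^sup>2 \<le> (b - a)\<^sup>2 * ((b - a) / 12 * E)" .
  then show ?thesis using \<open>a < b\<close> by (simp add: mult_le_cancel_left)
qed

lemma has_integral_moment_derivative: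
  fixes f g :: "real \<Rightarrow> real"
  assumes "a \<le> b" and ac: "abs_cont_on {a..b} f" and N: "negligible N"
    and der: "\<And>x. x \<in> {a..b} - N \<Longrightarrow> (f has_real_derivative g x) (at x)"
    and mean: "(f has_integral 0) {a..b}"
  shows "((\<lambda>s. (s - t) * g s) has_integral (b - t) * f b - (a - t) * f a) {a..b}"
proof -
  have "abs_cont_on {a..b} (\<lambda>s. s - t)"
    by (rule lipschitz_on_imp_abs_cont_on) (auto intro: lipschitz_intros)
  then have "abs_cont_on {a..b} (\<lambda>s. (s - t) * f s)"
    using ac by (rule abs_cont_on_mult)
  then have "((\<lambda>s. f s + (s - t) * g s) has_integral (b - t) * f b - (a - t) * f a) {a..b}"
  proof (rule abs_cont_on_has_integral_derivative[OF \<open>a \<le> b\<close> _ N])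
    fix x assume "x \<in> {a..b} - N"
    then have "(f has_real_derivative g x) (at x)" by (rule der)
    then show "((\<lambda>s. (s - t) * f s) has_real_derivative f x + (x - t) * g x) (at x)"
      by (auto intro!: derivative_eq_intros)
  qed
  from has_integral_diff[OF this mean] show ?thesis by simp
qed

text \<open>Of the hypotheses on \<open>f\<close>, the bound uses only \<open>f a = f b\<close> and \<open>\<integral> f = 0\<close>.\<close>

lemma admissible_integral_identities:
  fixes f g :: "real \<Rightarrow> real"
  assumes "admissible I a b f g"
  shows admissible_has_integral_derivative:
      "\<And>u v. a \<le> u \<Longrightarrow> u \<le> v \<Longrightarrow> v \<le> b \<Longrightarrow> (g has_integral f v - f u) {u..v}"
    and admissible_has_integral_moment:
      "\<And>t. ((\<lambda>s. (s - t) * g s) has_integral (b - a) * f a) {a..b}"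
proof -
  from assms have I: "is_interval I" and acI: "abs_cont_on (interior I) f"
    and aI: "a \<in> interior I" and bI: "b \<in> interior I" and "a < b" and "f a = f b"
    and aeD: "AE x in lborel. x \<in> interior I \<longrightarrow> (f has_real_derivative g x) (at x)"
    and mean0: "(LBINT t:{a..b}. f t) = 0"
    unfolding admissible_def by auto
  have "{a..b} \<subseteq> interior I"
  proof -
    have "convex (interior I)" using I by (simp add: is_interval_convex)
    then have "closed_segment a b \<subseteq> interior I" using aI bI unfolding convex_contains_segment by blast
    then show ?thesis using \<open>a < b\<close> by (simp add: closed_segment_eq_real_ivl)
  qed
  then have ac: "abs_cont_on {a..b} f" by (rule abs_cont_on_subset[OF acI])
  obtain N where N: "negligible N"
    and derN: "\<And>x. x \<notin> N \<Longrightarrow> x \<in> interior I \<longrightarrow> (f has_real_derivative g x) (at x)"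
    using AE_lborel_negligible_exception[OF aeD] by blast
  have der: "(f has_real_derivative g x) (at x)" if "x \<in> {a..b} - N" for x
    using derN \<open>{a..b} \<subseteq> interior I\<close> that by blast
  show "(g has_integral f v - f u) {u..v}" if "a \<le> u" "u \<le> v" "v \<le> b" for u v
    using that by (intro abs_cont_on_has_integral_derivative[OF _ abs_cont_on_subset[OF ac] N] der) auto
  have "(f has_integral 0) {a..b}"
  proof -
    have si: "set_integrable lborel {a..b} f"
      by (rule borel_integrable_atLeastAtMost'[OF abs_cont_on_imp_continuous_on[OF ac]])
    then have "integral {a..b} f = 0" using set_borel_integral_eq_integral(2)[OF si] mean0 by simp
    then show ?thesis using set_borel_integral_eq_integral(1)[OF si] by (metis integrable_integral)
  qed
  moreover have "(b - t) * f b - (a - t) * f a = (b - a) * f a" for t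
    using \<open>f a = f b\<close> by (simp add: algebra_simps)
  ultimately show "((\<lambda>s. (s - t) * g s) has_integral (b - a) * f a) {a..b}" for t
    using has_integral_moment_derivative[OF _ ac N der, of t] \<open>a < b\<close> by simp
qed

lemma admissible_sup_square_le:
  fixes f g :: "real \<Rightarrow> real"
  assumes "admissible I a b f g"
  shows "ennreal (SUP x\<in>{a..b}. (f x)\<^sup>2)
           \<le> ennreal ((b - a) / 12) * (\<integral>\<^sup>+ x\<in>{a..b}. ennreal ((g x)\<^sup>2) \<partial>lborel)"
proof (cases "(\<integral>\<^sup>+ x\<in>{a..b}. ennreal ((g x)\<^sup>2) \<partial>lborel) = \<infinity>")
  case True
  moreover have "a < b" using assms unfolding admissible_def by auto
  ultimately show ?thesis by (simp add: ennreal_mult_top)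
next
  case False
  from assms have "a < b" and "f a = f b" and gint: "set_integrable lborel {a..b} g"
    unfolding admissible_def by auto
  have "set_borel_measurable lborel {a..b} g"
    using gint unfolding set_integrable_def set_borel_measurable_def by (rule borel_measurable_integrable)
  then obtain E where E: "((\<lambda>x. (g x)\<^sup>2) has_integral E) {a..b}"
    "(\<integral>\<^sup>+ x\<in>{a..b}. ennreal ((g x)\<^sup>2) \<partial>lborel) = ennreal E"
    using nn_integral_square_has_integral False by blast
  have "E \<ge> 0" using E(1) by (rule has_integral_nonneg) simp
  have "(f t)\<^sup>2 \<le> (b - a) / 12 * E" if t: "t \<in> {a..b}" for t
  proof (rule square_le_energy[OF \<open>a < b\<close> t \<open>f a = f b\<close> _ _ _ E(1)])
    show "(g has_integral f t - f a) {a..t}" "(g has_integral f b - f t) {t..b}"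
      using t by (auto intro!: admissible_has_integral_derivative[OF assms])
    show "((\<lambda>s. (s - t) * g s) has_integral (b - a) * f a) {a..b}"
      by (rule admissible_has_integral_moment[OF assms])
  qed
  then have "(SUP x\<in>{a..b}. (f x)\<^sup>2) \<le> (b - a) / 12 * E"
    using \<open>a < b\<close> by (intro cSUP_least) auto
  then have "ennreal (SUP x\<in>{a..b}. (f x)\<^sup>2) \<le> ennreal ((b - a) / 12 * E)"
    by (rule ennreal_leI)
  also have "\<dots> = ennreal ((b - a) / 12) * ennreal E"
    by (rule ennreal_mult) (use \<open>a < b\<close> \<open>E \<ge> 0\<close> in auto)
  finally show ?thesis using E(2) by simp
qed

section \<open>Sharpness\<close>

text \<open>The Legendre polynomial \<open>(3u\<^sup>2 - 1)/2\<close> in the variable \<open>u = (2x - a - b)/(b - a)\<close>.\<close>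

definition legendre2 :: "real \<Rightarrow> real \<Rightarrow> real \<Rightarrow> real" where
  "legendre2 a b x = 6 / (b - a)\<^sup>2 * (x - (a + b) / 2)\<^sup>2 - 1 / 2"

definition legendre2_deriv :: "real \<Rightarrow> real \<Rightarrow> real \<Rightarrow> real" where
  "legendre2_deriv a b x = 12 / (b - a)\<^sup>2 * (x - (a + b) / 2)"

lemma legendre2_has_real_derivative:
  "(legendre2 a b has_real_derivative legendre2_deriv a b x) (at x)"
proof -
  have "((\<lambda>x. (x - (a + b) / 2)\<^sup>2) has_real_derivative 2 * (x - (a + b) / 2)) (at x)"
    by (auto intro!: derivative_eq_intros)
  then have "((\<lambda>x. 6 / (b - a)\<^sup>2 * (x - (a + b) / 2)\<^sup>2 - 1 / 2) has_real_derivative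
      6 / (b - a)\<^sup>2 * (2 * (x - (a + b) / 2)) - 0) (at x)"
    by (intro DERIV_diff DERIV_cmult DERIV_const)
  then show ?thesis
    unfolding legendre2_def[abs_def] legendre2_deriv_def by (rule DERIV_cong) simp
qed

lemma legendre2_endpoints:
  assumes "a \<noteq> b"
  shows "legendre2 a b a = 1" "legendre2 a b b = 1"
proof -
  have *: "6 / L\<^sup>2 * (L / 2)\<^sup>2 - 1 / 2 = 1" if "L \<noteq> 0" for L :: real
    using that by (simp add: power_divide)
  have "a - (a + b) / 2 = - ((b - a) / 2)" "b - (a + b) / 2 = (b - a) / 2"
    by (simp_all add: field_simps)
  then have "legendre2 a b a = 6 / (b - a)\<^sup>2 * ((b - a) / 2)\<^sup>2 - 1 / 2"
    "legendre2 a b b = 6 / (b - a)\<^sup>2 * ((b - a) / 2)\<^sup>2 - 1 / 2"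
    unfolding legendre2_def by (simp_all only: power2_minus)
  then show "legendre2 a b a = 1" "legendre2 a b b = 1"
    using *[of "b - a"] assms by simp_all
qed

lemma abs_legendre2_le_1:
  assumes "x \<in> {a..b}"
  shows "\<bar>legendre2 a b x\<bar> \<le> 1"
proof -
  have "a \<le> x" "x \<le> b" using assms by auto
  then have "\<bar>x - (a + b) / 2\<bar> \<le> (b - a) / 2"
    by (simp add: abs_le_iff field_simps)
  then have "(x - (a + b) / 2)\<^sup>2 \<le> ((b - a) / 2)\<^sup>2"
    by (metis abs_ge_zero power2_abs power_mono)
  then have "6 / (b - a)\<^sup>2 * (x - (a + b) / 2)\<^sup>2 \<le> 6 / (b - a)\<^sup>2 * ((b - a) / 2)\<^sup>2"
    by (intro mult_left_mono) auto
  also have "\<dots> \<le> 3 / 2" by (cases "a = b") (simp_all add: power_divide)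
  finally have "6 / (b - a)\<^sup>2 * (x - (a + b) / 2)\<^sup>2 \<le> 3 / 2" .
  moreover have "0 \<le> 6 / (b - a)\<^sup>2 * (x - (a + b) / 2)\<^sup>2" by simp
  ultimately show ?thesis unfolding legendre2_def abs_le_iff by (intro conjI) linarith+
qed

lemma legendre2_diff:
  "legendre2 a b x - legendre2 a b y = 6 / (b - a)\<^sup>2 * ((x - y) * (x + y - a - b))"
proof -
  define c where "c = 6 / (b - a)\<^sup>2"
  define m where "m = (a + b) / 2"
  have "legendre2 a b x - legendre2 a b y = c * ((x - m)\<^sup>2 - (y - m)\<^sup>2)"
    unfolding legendre2_def c_def[symmetric] m_def[symmetric] by (simp add: right_diff_distrib)
  also have "(x - m)\<^sup>2 - (y - m)\<^sup>2 = (x - y) * (x + y - a - b)"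
    by (simp add: m_def power2_eq_square algebra_simps)
  finally show ?thesis by (simp only: c_def)
qed

lemma legendre2_lipschitz:
  assumes "a < b"
  shows "(6 / (b - a))-lipschitz_on {a..b} (legendre2 a b)"
proof (rule lipschitz_onI)
  fix x y assume xy: "x \<in> {a..b}" "y \<in> {a..b}"
  have "\<bar>legendre2 a b x - legendre2 a b y\<bar> = 6 / (b - a)\<^sup>2 * (\<bar>x - y\<bar> * \<bar>x + y - a - b\<bar>)"
    unfolding legendre2_diff by (simp add: abs_mult)
  also have "\<dots> \<le> 6 / (b - a)\<^sup>2 * (\<bar>x - y\<bar> * (b - a))"
    using xy by (intro mult_left_mono) auto
  also have "\<dots> = 6 / (b - a) * \<bar>x - y\<bar>" using assms by (simp add: power2_eq_square)
  finally show "dist (legendre2 a b x) (legendre2 a b y) \<le> 6 / (b - a) * dist x y"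
    by (simp add: dist_real_def)
qed (use assms in simp)

lemma has_integral_square_centered:
  fixes a b :: real
  assumes "a \<le> b"
  shows "((\<lambda>x. (x - (a + b) / 2)\<^sup>2) has_integral (b - a)^3 / 12) {a..b}"
proof -
  have "((b - (a + b) / 2)^3 - (a - (a + b) / 2)^3) / 3 = (b - a)^3 / 12"
    by (simp add: field_simps power3_eq_cube)
  with has_integral_square_shift[OF assms, of "(a + b) / 2"] show ?thesis by simp
qed

lemma has_integral_legendre2:
  assumes "a < b"
  shows "(legendre2 a b has_integral 0) {a..b}"
proof -
  have "((\<lambda>x. 6 / (b - a)\<^sup>2 * (x - (a + b) / 2)\<^sup>2 - 1 / 2) has_integral
      6 / (b - a)\<^sup>2 * ((b - a)^3 / 12) - measure lborel {a..b} *\<^sub>R (1 / 2)) {a..b}"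
    using assms by (intro has_integral_diff has_integral_mult_right has_integral_square_centered
        has_integral_const_real) auto
  moreover have "6 / L\<^sup>2 * (L^3 / 12) - L / 2 = 0" if "L \<noteq> 0" for L :: real
    using that by (simp add: power2_eq_square power3_eq_cube)
  then have "6 / (b - a)\<^sup>2 * ((b - a)^3 / 12) - (b - a) / 2 = 0"
    by this (use assms in simp)
  then have "6 / (b - a)\<^sup>2 * ((b - a)^3 / 12) - measure lborel {a..b} *\<^sub>R (1 / 2) = 0"
    using assms by simp
  ultimately show ?thesis unfolding legendre2_def[abs_def] by (simp only:)
qed

lemma has_integral_legendre2_deriv_square:
  assumes "a < b"
  shows "((\<lambda>x. (legendre2_deriv a b x)\<^sup>2) has_integral 12 / (b - a)) {a..b}"
proof -
  have "((\<lambda>x. (12 / (b - a)\<^sup>2)\<^sup>2 * (x - (a + b) / 2)\<^sup>2) has_integral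
      (12 / (b - a)\<^sup>2)\<^sup>2 * ((b - a)^3 / 12)) {a..b}"
    using assms by (intro has_integral_mult_right has_integral_square_centered) simp
  moreover have "(12 / L\<^sup>2)\<^sup>2 * (L^3 / 12) = 12 / L" if "L \<noteq> 0" for L :: real
    using that by (simp add: power2_eq_square power3_eq_cube)
  then have "(12 / (b - a)\<^sup>2)\<^sup>2 * ((b - a)^3 / 12) = 12 / (b - a)"
    by this (use assms in simp)
  moreover have "(\<lambda>x. (legendre2_deriv a b x)\<^sup>2) = (\<lambda>x. (12 / (b - a)\<^sup>2)\<^sup>2 * (x - (a + b) / 2)\<^sup>2)"
    by (simp only: legendre2_deriv_def power_mult_distrib)
  ultimately show ?thesis by (simp only:)
qed

lemma has_real_derivative_clamp:
  fixes p :: "real \<Rightarrow> real"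
  assumes "a < b" "x \<noteq> a" "x \<noteq> b" and der: "(p has_real_derivative D) (at x)"
  shows "((\<lambda>y. p (max a (min b y))) has_real_derivative (if x \<in> {a..b} then D else 0)) (at x)"
proof -
  consider "x < a" | "a < x" "x < b" | "b < x" using assms by linarith
  then show ?thesis
  proof cases
    case 1
    have "((\<lambda>_. p a) has_real_derivative 0) (at x)" by simp
    then have "((\<lambda>y. p (max a (min b y))) has_real_derivative 0) (at x)"
      by (rule has_field_derivative_transform_within_open[where S = "{..<a}"])
         (use 1 \<open>a < b\<close> in auto)
    with 1 show ?thesis by simp
  next
    case 2
    from der have "((\<lambda>y. p (max a (min b y))) has_real_derivative D) (at x)"
      by (rule has_field_derivative_transform_within_open[where S = "{a<..<b}"]) (use 2 in auto)
    with 2 show ?thesis by simp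
  next
    case 3
    have "((\<lambda>_. p b) has_real_derivative 0) (at x)" by simp
    then have "((\<lambda>y. p (max a (min b y))) has_real_derivative 0) (at x)"
      by (rule has_field_derivative_transform_within_open[where S = "{b<..}"])
         (use 3 \<open>a < b\<close> in auto)
    with 3 show ?thesis by simp
  qed
qed

lemma admissible_legendre2:
  assumes "is_interval I" "a \<in> interior I" "b \<in> interior I" "a < b"
  shows "admissible I a b (\<lambda>x. legendre2 a b (max a (min b x)))
           (\<lambda>x. if x \<in> {a..b} then legendre2_deriv a b x else 0)"
    (is "admissible I a b ?f ?g")
  unfolding admissible_def
proof (intro conjI)
  show "is_interval I" "a \<in> interior I" "b \<in> interior I" "a < b" by fact+
  have "1-lipschitz_on UNIV (\<lambda>x::real. max a (min b x))"
    by (rule lipschitz_onI) (auto simp: dist_real_def max_def min_def)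
  moreover have "(6 / (b - a))-lipschitz_on ((\<lambda>x. max a (min b x)) ` UNIV) (legendre2 a b)"
    using legendre2_lipschitz[OF \<open>a < b\<close>] by (rule lipschitz_on_subset)
      (use \<open>a < b\<close> in \<open>auto simp: max_def min_def\<close>)
  ultimately have "(6 / (b - a) * 1)-lipschitz_on UNIV ?f" by (rule lipschitz_on_compose2)
  then show "abs_cont_on (interior I) ?f"
    by (rule lipschitz_on_imp_abs_cont_on[OF lipschitz_on_subset[OF _ subset_UNIV]])
  have "AE x in lborel. x \<noteq> a" "AE x in lborel. x \<noteq> b" by (rule AE_lborel_singleton)+
  then show "AE x in lborel. x \<in> interior I \<longrightarrow> (?f has_real_derivative ?g x) (at x)"
    by eventually_elim
       (use has_real_derivative_clamp[OF \<open>a < b\<close> _ _ legendre2_has_real_derivative] in auto)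
  have "continuous_on {a..b} (legendre2_deriv a b)"
    unfolding legendre2_deriv_def by (intro continuous_intros)
  then have "set_integrable lborel {a..b} (legendre2_deriv a b)"
    by (rule borel_integrable_atLeastAtMost')
  moreover have "set_integrable lborel {a..b} ?g \<longleftrightarrow> set_integrable lborel {a..b} (legendre2_deriv a b)"
    by (rule set_integrable_cong) auto
  ultimately show "set_integrable lborel {a..b} ?g" by simp
  have "?f a = 1" "?f b = 1" using legendre2_endpoints \<open>a < b\<close> by simp_all
  then show "?f a = ?f b" by simp
  show "\<forall>x\<in>{a..b}. ?f x \<le> ?f a"
  proof
    fix x assume "x \<in> {a..b}"
    with abs_legendre2_le_1[OF this] \<open>?f a = 1\<close> show "?f x \<le> ?f a" by (simp add: abs_le_iff)
  qed
  have "continuous_on {a..b} (legendre2 a b)"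
    unfolding legendre2_def[abs_def] by (intro continuous_intros)
  then have "continuous_on {a..b} ?f" by (rule continuous_on_eq) simp
  then have "set_integrable lborel {a..b} ?f" by (rule borel_integrable_atLeastAtMost')
  moreover have "(?f has_integral 0) {a..b}"
    by (rule has_integral_eq[OF _ has_integral_legendre2[OF \<open>a < b\<close>]]) simp
  ultimately show "(LBINT t:{a..b}. ?f t) = 0"
    by (simp add: set_borel_integral_eq_integral(2) integral_unique)
qed

lemma admissible_sup_square_sharp:
  fixes I :: "real set" and a b c :: real
  assumes "is_interval I" "a \<in> interior I" "b \<in> interior I" "a < b" and "c < (b - a) / 12"
  shows "\<exists>f g. admissible I a b f g \<and>
           \<not> (ennreal (SUP x\<in>{a..b}. (f x)\<^sup>2)
                \<le> ennreal c * (\<integral>\<^sup>+ x\<in>{a..b}. ennreal ((g x)\<^sup>2) \<partial>lborel))"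
proof -
  define f where "f x = legendre2 a b (max a (min b x))" for x
  define g where "g x = (if x \<in> {a..b} then legendre2_deriv a b x else 0)" for x
  have "admissible I a b f g"
    unfolding f_def[abs_def] g_def[abs_def] using assms(1-4) by (rule admissible_legendre2)
  have "(f x)\<^sup>2 \<le> 1" if "x \<in> {a..b}" for x
    using abs_legendre2_le_1[OF that] that by (simp add: f_def abs_square_le_1)
  then have "bdd_above ((\<lambda>x. (f x)\<^sup>2) ` {a..b})" by (intro bdd_aboveI2[of _ _ 1])
  then have "(f a)\<^sup>2 \<le> (SUP x\<in>{a..b}. (f x)\<^sup>2)"
    using \<open>a < b\<close> by (intro cSUP_upper) auto
  then have sup: "1 \<le> (SUP x\<in>{a..b}. (f x)\<^sup>2)"
    using legendre2_endpoints \<open>a < b\<close> by (simp add: f_def)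
  have "(\<integral>\<^sup>+ x\<in>{a..b}. ennreal ((g x)\<^sup>2) \<partial>lborel)
      = (\<integral>\<^sup>+ x. ennreal ((legendre2_deriv a b x)\<^sup>2) * indicator {a..b} x \<partial>lborel)"
    by (intro nn_integral_cong) (auto simp: g_def indicator_def)
  also have "\<dots> = ennreal (12 / (b - a))"
    by (rule nn_integral_has_integral_lebesgue'[OF _ has_integral_legendre2_deriv_square[OF \<open>a < b\<close>]])
       simp
  finally have energy: "(\<integral>\<^sup>+ x\<in>{a..b}. ennreal ((g x)\<^sup>2) \<partial>lborel) = ennreal (12 / (b - a))" .
  have "ennreal c * ennreal (12 / (b - a)) = ennreal (max 0 c) * ennreal (12 / (b - a))"
    by (simp add: ennreal_max_0)
  also have "\<dots> = ennreal (max 0 c * (12 / (b - a)))"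
    by (rule ennreal_mult[symmetric]) (use \<open>a < b\<close> in auto)
  also have "\<dots> < ennreal 1"
  proof (rule ennreal_lessI)
    have "max 0 c * (12 / (b - a)) < (b - a) / 12 * (12 / (b - a))"
      using assms(4,5) by (intro mult_strict_right_mono) auto
    also have "(b - a) / 12 * (12 / (b - a)) = 1" using \<open>a < b\<close> by simp
    finally show "max 0 c * (12 / (b - a)) < 1" .
  qed simp
  also have "\<dots> \<le> ennreal (SUP x\<in>{a..b}. (f x)\<^sup>2)" using sup by (rule ennreal_leI)
  finally have "ennreal c * ennreal (12 / (b - a)) < ennreal (SUP x\<in>{a..b}. (f x)\<^sup>2)" .
  with \<open>admissible I a b f g\<close> energy show ?thesis
    by (intro exI[of _ f] exI[of _ g]) (simp add: not_le)
qed

theorem theorem5: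
  fixes I :: "real set" and a b :: real
  assumes "is_interval I" and "a \<in> interior I" and "b \<in> interior I" and "a < b"
  shows "(\<forall>f g. admissible I a b f g \<longrightarrow>
            ennreal (SUP x\<in>{a..b}. (f x)\<^sup>2)
              \<le> ennreal ((b - a) / 12) * (\<integral>\<^sup>+ x\<in>{a..b}. ennreal ((g x)\<^sup>2) \<partial>lborel))
       \<and> (\<forall>c. c < (b - a) / 12 \<longrightarrow>
            (\<exists>f g. admissible I a b f g \<and>
              \<not> (ennreal (SUP x\<in>{a..b}. (f x)\<^sup>2)
                   \<le> ennreal c * (\<integral>\<^sup>+ x\<in>{a..b}. ennreal ((g x)\<^sup>2) \<partial>lborel))))"
proof (intro conjI allI impI)
  fix f g assume "admissible I a b f g"
  then show "ennreal (SUP x\<in>{a..b}. (f x)\<^sup>2)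
      \<le> ennreal ((b - a) / 12) * (\<integral>\<^sup>+ x\<in>{a..b}. ennreal ((g x)\<^sup>2) \<partial>lborel)"
    by (rule admissible_sup_square_le)
next
  fix c assume "c < (b - a) / 12"
  with assms show "\<exists>f g. admissible I a b f g \<and>
      \<not> (ennreal (SUP x\<in>{a..b}. (f x)\<^sup>2) \<le> ennreal c * (\<integral>\<^sup>+ x\<in>{a..b}. ennreal ((g x)\<^sup>2) \<partial>lborel))"
    by (rule admissible_sup_square_sharp)
qed

end
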